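(* Assume $r\ge2$, let $F:(\mathbb{R}^n,D)\to(\mathbb{R}^n,D)$ be an $\eta$-quasisymmetric homeomorphism, and write $F(x,y)=(H(x,y),G(y))$ for $x\in\mathbb{R}^{n_1}$, $y\in Y$, where $G:Y\to Y$ and $H:\mathbb{R}^{n_1}\times Y\to\mathbb{R}^{n_1}$ (such maps exist since $F$ maps each horizontal leaf $\mathbb{R}^{n_1}\times\{y\}$ onto a horizontal leaf). Then for all $y\in Y$ and $x\in\mathbb{R}^{n_1}$: (1) $L_G(y,\rho)\le\eta(1)\,l_{H(\cdot,y)}(x,\rho)$ for every $\rho>0$; (2) $\eta^{-1}(1)\,l_{H(\cdot,y)}(x)\le l_G(y)\le\eta(1)\,l_{H(\cdot,y)}(x)$; (3) $\eta^{-1}(1)\,L_{H(\cdot,y)}(x)\le L_G(y)\le\eta(1)\,L_{H(\cdot,y)}(x)$. Here quantities for $G$ are computed with respect to $D_Y$ and quantities for $H(\cdot,y)$ with respect to the Euclidean metric on $\mathbb{R}^{n_1}$.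
   Context: Let $n_1,\dots,n_r\ge1$, $n=n_1+\dots+n_r$, $0<\alpha_1<\dots<\alpha_r$. For $x=(x_1,\dots,x_r)\in\mathbb{R}^n=\mathbb{R}^{n_1}\times\dots\times\mathbb{R}^{n_r}$, $D(x,y)=\max\{|x_1-y_1|,|x_2-y_2|^{\alpha_1/\alpha_2},\dots,|x_r-y_r|^{\alpha_1/\alpha_r}\}$. Set $Y=\mathbb{R}^{n_2}\times\dots\times\mathbb{R}^{n_r}$, so $\mathbb{R}^n=\mathbb{R}^{n_1}\times Y$, with $D_Y((x_2,\dots,x_r),(x_2',\dots,x_r'))=\max_{2\le i\le r}|x_i-x_i'|^{\alpha_1/\alpha_i}$. $\eta:[0,\infty)\to[0,\infty)$ is a homeomorphism; $f$ is $\eta$-quasisymmetric if $\frac{d(f(x),f(y))}{d(f(x),f(z))}\le\eta(\frac{d(x,y)}{d(x,z)})$ for distinct $x,y,z$. For a homeomorphism $g$ of metric spaces, $x$ in the domain and $\rho>0$: $L_g(x,\rho)=\sup\{d(g(x),g(x')):d(x,x')\le\rho\}$, $l_g(x,\rho)=\inf\{d(g(x),g(x')):d(x,x')\ge\rho\}$, $L_g(x)=\limsup_{\rho\to0}L_g(x,\rho)/\rho$, $l_g(x)=\liminf_{\rho\to0}l_g(x,\rho)/\rho$. *)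

theory Defs
  imports "HOL-Analysis.Analysis"
begin

text \<open>Blocks: a vector of R^m is a function nat => real vanishing from index m on.
  A point of R^n = R^{n_1} x ... x R^{n_r} is a function nat => (nat => real);
  block i (0-based, i < r) lies in R^{nn i}, blocks i >= r vanish.
  The paper's index k (1..r) corresponds to our i = k - 1.\<close>

definition Rsp :: "nat \<Rightarrow> (nat \<Rightarrow> real) set" where
  "Rsp m = {v. \<forall>j\<ge>m. v j = 0}"

definition bnorm :: "nat \<Rightarrow> (nat \<Rightarrow> real) \<Rightarrow> real" where
  "bnorm m v = sqrt (\<Sum>j<m. (v j)\<^sup>2)"

definition edist :: "nat \<Rightarrow> (nat \<Rightarrow> real) \<Rightarrow> (nat \<Rightarrow> real) \<Rightarrow> real" where
  "edist m u v = bnorm m (u - v)"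

definition PSp :: "nat \<Rightarrow> (nat \<Rightarrow> nat) \<Rightarrow> (nat \<Rightarrow> nat \<Rightarrow> real) set" where
  "PSp r nn = {x. (\<forall>i<r. x i \<in> Rsp (nn i)) \<and> (\<forall>i\<ge>r. x i = (\<lambda>_. 0))}"

definition Dmet :: "nat \<Rightarrow> (nat \<Rightarrow> nat) \<Rightarrow> (nat \<Rightarrow> real) \<Rightarrow>
    (nat \<Rightarrow> nat \<Rightarrow> real) \<Rightarrow> (nat \<Rightarrow> nat \<Rightarrow> real) \<Rightarrow> real" where
  "Dmet r nn \<alpha> x y = Max ((\<lambda>i. bnorm (nn i) (x i - y i) powr (\<alpha> 0 / \<alpha> i)) ` {..<r})"

text \<open>Y = R^{n_2} x ... x R^{n_r}: points of R^n whose first block is zero.\<close>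
definition YSp :: "nat \<Rightarrow> (nat \<Rightarrow> nat) \<Rightarrow> (nat \<Rightarrow> nat \<Rightarrow> real) set" where
  "YSp r nn = {y \<in> PSp r nn. y 0 = (\<lambda>_. 0)}"

definition DYmet :: "nat \<Rightarrow> (nat \<Rightarrow> nat) \<Rightarrow> (nat \<Rightarrow> real) \<Rightarrow>
    (nat \<Rightarrow> nat \<Rightarrow> real) \<Rightarrow> (nat \<Rightarrow> nat \<Rightarrow> real) \<Rightarrow> real" where
  "DYmet r nn \<alpha> x y = Max ((\<lambda>i. bnorm (nn i) (x i - y i) powr (\<alpha> 0 / \<alpha> i)) ` {1..<r})"

definition quasisymmetric_on ::
  "'a set \<Rightarrow> ('a \<Rightarrow> 'a \<Rightarrow> real) \<Rightarrow> ('b \<Rightarrow> 'b \<Rightarrow> real) \<Rightarrow> (real \<Rightarrow> real) \<Rightarrow> ('a \<Rightarrow> 'b) \<Rightarrow> bool" where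
  "quasisymmetric_on A d d' \<eta> f \<longleftrightarrow>
     (\<forall>x\<in>A. \<forall>y\<in>A. \<forall>z\<in>A. x \<noteq> y \<and> x \<noteq> z \<and> y \<noteq> z \<longrightarrow>
        d' (f x) (f y) / d' (f x) (f z) \<le> \<eta> (d x y / d x z))"

definition Lrad ::
  "'a set \<Rightarrow> ('a \<Rightarrow> 'a \<Rightarrow> real) \<Rightarrow> ('b \<Rightarrow> 'b \<Rightarrow> real) \<Rightarrow> ('a \<Rightarrow> 'b) \<Rightarrow> 'a \<Rightarrow> real \<Rightarrow> ereal" where
  "Lrad A d d' g x \<rho> = Sup {ereal (d' (g x) (g x')) | x'. x' \<in> A \<and> d x x' \<le> \<rho>}"

definition lrad ::
  "'a set \<Rightarrow> ('a \<Rightarrow> 'a \<Rightarrow> real) \<Rightarrow> ('b \<Rightarrow> 'b \<Rightarrow> real) \<Rightarrow> ('a \<Rightarrow> 'b) \<Rightarrow> 'a \<Rightarrow> real \<Rightarrow> ereal" where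
  "lrad A d d' g x \<rho> = Inf {ereal (d' (g x) (g x')) | x'. x' \<in> A \<and> d x x' \<ge> \<rho>}"

definition Lpt ::
  "'a set \<Rightarrow> ('a \<Rightarrow> 'a \<Rightarrow> real) \<Rightarrow> ('b \<Rightarrow> 'b \<Rightarrow> real) \<Rightarrow> ('a \<Rightarrow> 'b) \<Rightarrow> 'a \<Rightarrow> ereal" where
  "Lpt A d d' g x = Limsup (at_right 0) (\<lambda>\<rho>. Lrad A d d' g x \<rho> / ereal \<rho>)"

definition lpt ::
  "'a set \<Rightarrow> ('a \<Rightarrow> 'a \<Rightarrow> real) \<Rightarrow> ('b \<Rightarrow> 'b \<Rightarrow> real) \<Rightarrow> ('a \<Rightarrow> 'b) \<Rightarrow> 'a \<Rightarrow> ereal" where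
  "lpt A d d' g x = Liminf (at_right 0) (\<lambda>\<rho>. lrad A d d' g x \<rho> / ereal \<rho>)"

end

theory Submission
  imports Defs "HOL-Homology.Invariance_of_Domain"
begin

text \<open>Along a horizontal leaf the metric D is the Euclidean metric of the first block, and
  between two points with the same first block it is \<open>D\<^sub>Y\<close>. Applying quasisymmetry of F to
  the triple \<open>(x,y), (x',y), (x,y')\<close> with \<open>D\<^sub>Y(y,y') \<le> \<rho> \<le> |x - x'|\<close> bounds the displacement of G
  by \<open>\<eta>(1)\<close> times that of \<open>H(\<cdot>,y)\<close>, which is (1). Conversely, for \<open>D\<^sub>Y(y,y') \<ge> \<rho>\<close> and
  \<open>|x - x'| \<le> \<eta>\<^sup>-\<^sup>1(1) \<rho>\<close> choose \<open>x''\<close> with \<open>H(x'',y') = H(x,y)\<close>; then \<open>F(x,y)\<close> and \<open>F(x'',y')\<close>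
  differ only in the Y-part, and quasisymmetry for \<open>(x,y), (x',y), (x'',y')\<close> gives
  \<open>L\<^sub>H(x, \<eta>\<^sup>-\<^sup>1(1) \<rho>) \<le> l\<^sub>G(y,\<rho>)\<close>. Such an \<open>x''\<close> exists because \<open>H(\<cdot>,y')\<close> is a continuous injection
  of \<open>\<real>\<^sup>n\<^sup>1\<close>, hence open by invariance of domain, and the images of the leaves over the fibre
  \<open>G\<^sup>-\<^sup>1(G y')\<close> partition \<open>\<real>\<^sup>n\<^sup>1\<close> into open sets. Dividing by \<open>\<rho>\<close> and letting \<open>\<rho> \<rightarrow> 0\<close> gives (2) and (3).\<close>

lemma bnorm_nonneg: "bnorm m v \<ge> 0"
  by (simp add: bnorm_def sum_nonneg)

lemma fun_diff_self [simp]: "(u :: nat \<Rightarrow> real) - u = (\<lambda>_. 0)"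
  by auto

lemma bnorm_zero [simp]: "bnorm m (\<lambda>_. 0) = 0"
  by (simp add: bnorm_def)

lemma bnorm_commute: "bnorm m (u - v) = bnorm m (v - u)"
  unfolding bnorm_def by (simp add: power2_commute)

lemma bnorm_diff_pos:
  assumes "u \<in> Rsp m" "v \<in> Rsp m" "u \<noteq> v"
  shows "bnorm m (u - v) > 0"
proof -
  obtain j where j: "u j \<noteq> v j" using assms(3) by auto
  have "j < m" using assms j unfolding Rsp_def by (metis (mono_tags, lifting) mem_Collect_eq not_le)
  have "0 < (u j - v j)\<^sup>2" using j by simp
  also have "\<dots> \<le> (\<Sum>i<m. (u i - v i)\<^sup>2)" using \<open>j < m\<close> by (intro member_le_sum) auto
  finally show ?thesis unfolding bnorm_def by simp
qed

lemma bnorm_triangle: "bnorm m (a - c) \<le> bnorm m (a - b) + bnorm m (b - c)"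
proof -
  have "bnorm m v = L2_set v {..<m}" for v unfolding bnorm_def L2_set_def by simp
  moreover have "(\<lambda>i. (a - b) i + (b - c) i) = a - c" by auto
  ultimately show ?thesis using L2_set_triangle_ineq[of "a - b" "b - c" "{..<m}"] by simp
qed

lemma abs_coord_le_bnorm: "j < m \<Longrightarrow> \<bar>v j\<bar> \<le> bnorm m v"
proof -
  assume "j < m"
  then have "(v j)\<^sup>2 \<le> (\<Sum>i<m. (v i)\<^sup>2)" by (intro member_le_sum) auto
  then show ?thesis unfolding bnorm_def by (metis real_sqrt_abs real_sqrt_le_iff)
qed

lemma exists_Rsp_at_edist:
  assumes "m \<ge> 1" "x \<in> Rsp m" "t \<ge> 0"
  shows "\<exists>x'\<in>Rsp m. edist m x x' = t"
proof
  define x' where "x' = (\<lambda>j. x j + (if j = 0 then t else 0))"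
  show "x' \<in> Rsp m" using assms by (auto simp: Rsp_def x'_def)
  have "(\<Sum>j<m. ((x - x') j)\<^sup>2) = (\<Sum>j\<in>{0}. ((x - x') j)\<^sup>2)"
    by (rule sum.mono_neutral_right) (use assms in \<open>auto simp: x'_def\<close>)
  then show "edist m x x' = t" using assms by (simp add: edist_def bnorm_def x'_def)
qed

lemma edist_pos: "u \<in> Rsp m \<Longrightarrow> v \<in> Rsp m \<Longrightarrow> u \<noteq> v \<Longrightarrow> edist m u v > 0"
  by (simp add: edist_def bnorm_diff_pos)

lemma edist_nonneg: "edist m u v \<ge> 0"
  by (simp add: edist_def bnorm_nonneg)

lemma edist_self [simp]: "edist m u u = 0"
  by (simp add: edist_def)

section \<open>The metrics D and \<open>D\<^sub>Y\<close>\<close>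

lemma powr_add_le_add_powr:
  fixes s t b :: real
  assumes "s \<ge> 0" "t \<ge> 0" "0 < b" "b \<le> 1"
  shows "(s + t) powr b \<le> s powr b + t powr b"
proof (cases "s + t = 0")
  case True then show ?thesis using assms by simp
next
  case False
  then have st: "s + t > 0" using assms by simp
  define a c where "a = s / (s + t)" and "c = t / (s + t)"
  have a: "0 \<le> a" "a \<le> 1" and c: "0 \<le> c" "c \<le> 1" and ac: "a + c = 1"
    using assms st by (auto simp: a_def c_def add_divide_distrib[symmetric])
  have "a \<le> a powr b" "c \<le> c powr b"
    using powr_mono'[of b 1 a] powr_mono'[of b 1 c] a c assms by auto
  then have "(s + t) powr b * 1 \<le> (s + t) powr b * (a powr b + c powr b)"
    using ac by (intro mult_left_mono) auto
  also have "\<dots> = ((s + t) * a) powr b + ((s + t) * c) powr b"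
    using a c st by (simp add: powr_mult distrib_left)
  also have "\<dots> = s powr b + t powr b" using st by (simp add: a_def c_def)
  finally show ?thesis by simp
qed

lemma Dmet_metric:
  assumes r: "r \<ge> 1" and \<alpha>0: "\<alpha> 0 > 0" and \<alpha>mono: "strict_mono_on {..<r} \<alpha>"
  shows "Metric_space (PSp r nn) (Dmet r nn \<alpha>)"
proof
  let ?t = "\<lambda>x y i. bnorm (nn i) (x i - y i) powr (\<alpha> 0 / \<alpha> i)"
  have ge: "\<And>x y i. i < r \<Longrightarrow> ?t x y i \<le> Dmet r nn \<alpha> x y"
    unfolding Dmet_def by (intro Max_ge) auto
  fix x y z :: "nat \<Rightarrow> nat \<Rightarrow> real"
  show "0 \<le> Dmet r nn \<alpha> x y" using order.trans[OF powr_ge_zero ge[of 0 x y]] r by simp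
  show "Dmet r nn \<alpha> x y = Dmet r nn \<alpha> y x" unfolding Dmet_def by (simp add: bnorm_commute)
  show "x \<in> PSp r nn \<Longrightarrow> y \<in> PSp r nn \<Longrightarrow> (Dmet r nn \<alpha> x y = 0) = (x = y)"
  proof
    assume xy: "x \<in> PSp r nn" "y \<in> PSp r nn" "Dmet r nn \<alpha> x y = 0"
    have "x i = y i" for i
    proof (cases "i < r")
      case True
      then have "?t x y i \<le> 0" using ge[of i x y] xy by simp
      then have "\<not> bnorm (nn i) (x i - y i) > 0" by simp
      then show ?thesis using bnorm_diff_pos xy True unfolding PSp_def by blast
    next
      case False then show ?thesis using xy unfolding PSp_def by auto
    qed
    then show "x = y" by auto
  next
    assume "x = y"
    then show "Dmet r nn \<alpha> x y = 0" unfolding Dmet_def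
      using r by (intro Max_eqI) (auto simp: bnorm_def intro!: image_eqI[of _ _ 0])
  qed
  assume "x \<in> PSp r nn" "y \<in> PSp r nn" "z \<in> PSp r nn"
  have "?t x z i \<le> Dmet r nn \<alpha> x y + Dmet r nn \<alpha> y z" if i: "i < r" for i
  proof -
    have "\<alpha> 0 \<le> \<alpha> i" using strict_mono_onD[OF \<alpha>mono, of 0 i] i by (cases "i = 0") auto
    then have b: "0 < \<alpha> 0 / \<alpha> i" "\<alpha> 0 / \<alpha> i \<le> 1" using \<alpha>0 by auto
    have "?t x z i \<le> (bnorm (nn i) (x i - y i) + bnorm (nn i) (y i - z i)) powr (\<alpha> 0 / \<alpha> i)"
      using b by (intro powr_mono2 bnorm_triangle) (auto simp: bnorm_nonneg)
    also have "\<dots> \<le> ?t x y i + ?t y z i"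
      using b by (intro powr_add_le_add_powr) (auto simp: bnorm_nonneg)
    also have "\<dots> \<le> Dmet r nn \<alpha> x y + Dmet r nn \<alpha> y z" using ge[OF i] by (intro add_mono)
    finally show ?thesis .
  qed
  then show "Dmet r nn \<alpha> x z \<le> Dmet r nn \<alpha> x y + Dmet r nn \<alpha> y z"
    unfolding Dmet_def[of r nn \<alpha> x z] using r by (subst Max_le_iff) (auto simp: lessThan_empty_iff)
qed

lemma Dmet_upd0_same:
  assumes "r \<ge> 1" "\<alpha> 0 > 0"
  shows "Dmet r nn \<alpha> (y(0 := u)) (y(0 := v)) = edist (nn 0) u v"
  unfolding Dmet_def edist_def
proof (rule Max_eqI)
  fix z assume "z \<in> (\<lambda>i. bnorm (nn i) ((y(0 := u)) i - (y(0 := v)) i) powr (\<alpha> 0 / \<alpha> i)) ` {..<r}"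
  then obtain i where "i < r" "z = bnorm (nn i) ((y(0 := u)) i - (y(0 := v)) i) powr (\<alpha> 0 / \<alpha> i)"
    by auto
  then show "z \<le> bnorm (nn 0) (u - v)"
    using assms by (cases "i = 0") (auto simp: bnorm_nonneg)
qed (use assms in \<open>auto simp: bnorm_nonneg intro!: image_eqI[of _ _ 0]\<close>)

lemma DYmet_upd0 [simp]: "DYmet r nn \<alpha> (p(0 := u)) (q(0 := v)) = DYmet r nn \<alpha> p q"
  unfolding DYmet_def by (intro arg_cong[where f = Max] image_cong) auto

lemma DYmet_nonneg: "r \<ge> 2 \<Longrightarrow> DYmet r nn \<alpha> p q \<ge> 0"
  unfolding DYmet_def
  by (rule order.trans[OF _ Max_ge[where x = "bnorm (nn 1) (p 1 - q 1) powr (\<alpha> 0 / \<alpha> 1)"]]) auto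

lemma DYmet_le_Dmet: "r \<ge> 2 \<Longrightarrow> DYmet r nn \<alpha> p q \<le> Dmet r nn \<alpha> p q"
  unfolding DYmet_def Dmet_def by (rule Max_mono) auto

lemma Dmet_eq_DYmet:
  assumes "r \<ge> 2" "p 0 = q 0"
  shows "Dmet r nn \<alpha> p q = DYmet r nn \<alpha> p q"
proof (rule antisym)
  have "bnorm (nn i) (p i - q i) powr (\<alpha> 0 / \<alpha> i) \<le> DYmet r nn \<alpha> p q" if "i < r" for i
  proof (cases "i = 0")
    case True then show ?thesis using assms DYmet_nonneg[of r nn \<alpha> p q] by (simp add: bnorm_def)
  next
    case False then show ?thesis using that unfolding DYmet_def by (intro Max_ge) auto
  qed
  then show "Dmet r nn \<alpha> p q \<le> DYmet r nn \<alpha> p q"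
    unfolding Dmet_def[of r] using assms by (subst Max_le_iff) (auto simp: lessThan_empty_iff)
qed (rule DYmet_le_Dmet[OF assms(1)])

lemma DYmet_eq_0:
  assumes "r \<ge> 2" "\<forall>i\<in>{1..<r}. p i = q i"
  shows "DYmet r nn \<alpha> p q = 0"
  unfolding DYmet_def
  by (rule Max_eqI) (use assms in \<open>auto simp: bnorm_def intro!: image_eqI[of _ _ 1]\<close>)

lemma exists_YSp_at_DYmet:
  assumes r: "r \<ge> 2" and nn: "\<forall>i<r. nn i \<ge> 1" and \<alpha>: "\<alpha> 0 > 0" "\<alpha> 1 > 0"
    and y: "y \<in> YSp r nn" and \<rho>: "\<rho> \<ge> 0"
  shows "\<exists>y'\<in>YSp r nn. DYmet r nn \<alpha> y y' = \<rho>"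
proof -
  obtain v where v: "v \<in> Rsp (nn 1)" "edist (nn 1) (y 1) v = \<rho> powr (\<alpha> 1 / \<alpha> 0)"
  proof -
    have "nn 1 \<ge> 1" "y 1 \<in> Rsp (nn 1)" using nn r y by (auto simp: YSp_def PSp_def)
    then show thesis
      using that exists_Rsp_at_edist[of "nn 1" "y 1" "\<rho> powr (\<alpha> 1 / \<alpha> 0)"] by auto
  qed
  define y' where "y' = y(1 := v)"
  have "y' \<in> YSp r nn" using y v r unfolding YSp_def PSp_def y'_def by auto
  moreover have "DYmet r nn \<alpha> y y' = \<rho>"
    unfolding DYmet_def
  proof (rule Max_eqI)
    have "bnorm (nn 1) (y 1 - y' 1) powr (\<alpha> 0 / \<alpha> 1) = \<rho>"
      using v \<alpha> \<rho> by (simp add: y'_def edist_def powr_powr)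
    then show "\<rho> \<in> (\<lambda>i. bnorm (nn i) (y i - y' i) powr (\<alpha> 0 / \<alpha> i)) ` {1..<r}"
      using r by (auto intro!: image_eqI[of _ _ 1])
    fix z assume "z \<in> (\<lambda>i. bnorm (nn i) (y i - y' i) powr (\<alpha> 0 / \<alpha> i)) ` {1..<r}"
    then show "z \<le> \<rho>" using \<open>_ = \<rho>\<close> \<rho> by (auto simp: y'_def bnorm_def)
  qed simp
  ultimately show ?thesis by blast
qed

section \<open>Homeomorphisms of the half-line\<close>

lemma homeomorphism_atLeast0_strict_mono:
  fixes \<eta> \<eta>' :: "real \<Rightarrow> real"
  assumes h: "homeomorphism {0..} {0..} \<eta> \<eta>'"
  shows "strict_mono_on {0..} \<eta>"
proof -
  have inv: "\<And>x. x \<ge> 0 \<Longrightarrow> \<eta>' (\<eta> x) = x" and cont: "continuous_on {0..} \<eta>"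
    and img: "\<eta> ` {0..} = {0..}"
    using h unfolding homeomorphism_def by auto
  have "inj_on \<eta> {0..}" by (rule inj_on_inverseI[of _ \<eta>']) (simp add: inv)
  then have "strict_mono_on {0..} \<eta> \<or> strict_antimono_on {0..} \<eta>"
    using injective_eq_monotone_map[OF is_interval_ci cont] by blast
  moreover have "\<not> strict_antimono_on {0..} \<eta>"
  proof
    assume anti: "strict_antimono_on {0..} \<eta>"
    have "\<eta> 0 \<ge> 0" using img by auto
    then have "\<eta> 0 + 1 \<in> \<eta> ` {0..}" unfolding img by simp
    then obtain t where t: "t \<ge> 0" "\<eta> t = \<eta> 0 + 1" by auto
    then have "0 < t" by (cases "t = 0") auto
    then have "\<eta> t < \<eta> 0" using anti by (simp add: monotone_on_def)
    with t show False by simp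
  qed
  ultimately show ?thesis by blast
qed

lemma homeomorphism_atLeast0_zero:
  fixes \<eta> \<eta>' :: "real \<Rightarrow> real"
  assumes h: "homeomorphism {0..} {0..} \<eta> \<eta>'"
  shows "\<eta> 0 = 0"
proof -
  have img: "\<eta> ` {0..} = {0..}" using h by (simp add: homeomorphism_def)
  then obtain t where "t \<ge> 0" "\<eta> t = 0" by (metis atLeast_iff imageE order_refl)
  moreover have "\<eta> 0 \<ge> 0" using img by auto
  ultimately show ?thesis
    using strict_mono_onD[OF homeomorphism_atLeast0_strict_mono[OF h], of 0 t]
    by (cases "t = 0") auto
qed

lemma homeomorphism_atLeast0_small:
  fixes \<eta> \<eta>' :: "real \<Rightarrow> real"
  assumes h: "homeomorphism {0..} {0..} \<eta> \<eta>'" and "\<epsilon> > 0"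
  shows "\<exists>\<delta>>0. \<forall>t. 0 \<le> t \<and> t < \<delta> \<longrightarrow> \<eta> t < \<epsilon>"
proof -
  have "continuous_on {0..} \<eta>" using h by (simp add: homeomorphism_def)
  then obtain \<delta> where "\<delta> > 0" "\<forall>t\<in>{0..}. dist t 0 < \<delta> \<longrightarrow> dist (\<eta> t) (\<eta> 0) < \<epsilon>"
    using \<open>\<epsilon> > 0\<close> unfolding continuous_on_iff by (meson atLeast_iff order_refl)
  then show ?thesis using homeomorphism_atLeast0_zero[OF h]
    by (intro exI[of _ \<delta>]) (auto simp: dist_real_def)
qed

section \<open>Invariance of domain for Euclidean blocks\<close>

lemma topspace_Euclidean_space_Rsp: "topspace (Euclidean_space m) = Rsp m"
  by (simp add: topspace_Euclidean_space Rsp_def)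

lemma continuous_map_Euclidean_space_coord:
  "continuous_map (Euclidean_space m) euclideanreal (\<lambda>x. x j)"
  unfolding Euclidean_space_def
  by (rule continuous_map_from_subtopology, rule continuous_map_product_projection) simp

lemma openin_Euclidean_space_edist_ball:
  assumes "\<delta> > 0"
  shows "openin (Euclidean_space m) {u' \<in> Rsp m. edist m u u' < \<delta>}"
proof -
  let ?f = "\<lambda>u'. \<Sum>j<m. (u j - u' j) * (u j - u' j)"
  have "continuous_map (Euclidean_space m) euclideanreal ?f"
    by (intro continuous_map_sum continuous_map_real_mult continuous_map_diff
        continuous_map_Euclidean_space_coord continuous_map_const[THEN iffD2]) auto
  then have "openin (Euclidean_space m) {x \<in> topspace (Euclidean_space m). ?f x \<in> {..<\<delta>^2}}"
    by (rule openin_continuous_map_preimage) simp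
  moreover have "edist m u u' < \<delta> \<longleftrightarrow> ?f u' < \<delta>^2" for u'
  proof -
    have "edist m u u' = sqrt (?f u')" by (simp add: edist_def bnorm_def power2_eq_square)
    moreover have "\<delta> = sqrt (\<delta>^2)" using assms by simp
    ultimately show ?thesis by (metis real_sqrt_less_iff)
  qed
  ultimately show ?thesis by (simp add: topspace_Euclidean_space_Rsp)
qed

lemma continuous_map_Euclidean_space_edist:
  assumes hmap: "\<forall>u\<in>Rsp m. h u \<in> Rsp m"
    and hc: "\<forall>u\<in>Rsp m. \<forall>\<epsilon>>0. \<exists>\<delta>>0. \<forall>u'\<in>Rsp m. edist m u u' < \<delta> \<longrightarrow> edist m (h u) (h u') < \<epsilon>"
  shows "continuous_map (Euclidean_space m) (Euclidean_space m) h"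
proof -
  have "continuous_map (Euclidean_space m) euclideanreal (\<lambda>x. h x k)" for k
    unfolding continuous_map_eq_topcontinuous_at topcontinuous_at_def
  proof (intro ballI conjI allI impI)
    fix x V assume x: "x \<in> topspace (Euclidean_space m)" and V: "openin euclideanreal V \<and> h x k \<in> V"
    then have xR: "x \<in> Rsp m" by (simp add: topspace_Euclidean_space_Rsp)
    obtain \<epsilon> where \<epsilon>: "\<epsilon> > 0" "ball (h x k) \<epsilon> \<subseteq> V" using V by (meson open_contains_ball open_openin)
    obtain \<delta> where \<delta>: "\<delta> > 0" "\<forall>u'\<in>Rsp m. edist m x u' < \<delta> \<longrightarrow> edist m (h x) (h u') < \<epsilon>"
      using hc xR \<epsilon> by blast
    show "\<exists>U. openin (Euclidean_space m) U \<and> x \<in> U \<and> (\<forall>y\<in>U. h y k \<in> V)"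
    proof (intro exI conjI ballI)
      show "openin (Euclidean_space m) {u' \<in> Rsp m. edist m x u' < \<delta>}"
        by (rule openin_Euclidean_space_edist_ball[OF \<delta>(1)])
      show "x \<in> {u' \<in> Rsp m. edist m x u' < \<delta>}" using xR \<delta> by (simp add: edist_def bnorm_def)
      fix y assume y: "y \<in> {u' \<in> Rsp m. edist m x u' < \<delta>}"
      have "dist (h x k) (h y k) < \<epsilon>"
      proof (cases "k < m")
        case True
        then have "\<bar>(h x - h y) k\<bar> \<le> edist m (h x) (h y)"
          unfolding edist_def by (rule abs_coord_le_bnorm)
        then show ?thesis using \<delta>(2) y by (force simp: dist_real_def)
      next
        case False then show ?thesis using hmap xR y \<epsilon> by (simp add: Rsp_def)
      qed
      then show "h y k \<in> V" using \<epsilon> by (auto simp: dist_commute)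
    qed
  qed auto
  then have "continuous_map (Euclidean_space m) (powertop_real UNIV) h"
    by (simp add: continuous_map_componentwise_UNIV)
  moreover have "Euclidean_space m = subtopology (powertop_real UNIV) (Rsp m)"
    by (simp add: Euclidean_space_def Rsp_def)
  ultimately show ?thesis
    by (subst (2) \<open>Euclidean_space m = _\<close>, subst continuous_map_in_subtopology)
      (use hmap in \<open>auto simp: topspace_Euclidean_space_Rsp\<close>)
qed

lemma openin_image_Euclidean_space:
  assumes "\<forall>u\<in>Rsp m. h u \<in> Rsp m"
    and "\<forall>u\<in>Rsp m. \<forall>\<epsilon>>0. \<exists>\<delta>>0. \<forall>u'\<in>Rsp m. edist m u u' < \<delta> \<longrightarrow> edist m (h u) (h u') < \<epsilon>"
    and "inj_on h (Rsp m)"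
  shows "openin (Euclidean_space m) (h ` Rsp m)"
proof -
  have "openin (Euclidean_space m) (h ` topspace (Euclidean_space m))"
    using invariance_of_domain_Euclidean_space[of m "topspace (Euclidean_space m)" h]
      continuous_map_Euclidean_space_edist[OF assms(1,2)] assms(3)[folded topspace_Euclidean_space_Rsp]
    by simp
  then show ?thesis by (simp add: topspace_Euclidean_space_Rsp)
qed

lemma lrad_le_Lrad:
  assumes "x' \<in> A" "d x x' = \<rho>"
  shows "lrad A d d' g x \<rho> \<le> Lrad A d d' g x \<rho>"
proof -
  have "lrad A d d' g x \<rho> \<le> ereal (d' (g x) (g x'))"
    unfolding lrad_def by (rule Inf_lower) (use assms in auto)
  also have "\<dots> \<le> Lrad A d d' g x \<rho>"
    unfolding Lrad_def by (rule Sup_upper) (use assms in auto)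
  finally show ?thesis .
qed

lemma Lrad_le_scaled_lrad:
  assumes "c > 0"
    and "\<And>y' x'. y' \<in> A \<Longrightarrow> d y y' \<le> \<rho> \<Longrightarrow> x' \<in> B \<Longrightarrow> e x x' \<ge> \<sigma> \<Longrightarrow>
           d' (g y) (g y') \<le> c * e' (h x) (h x')"
  shows "Lrad A d d' g y \<rho> \<le> ereal c * lrad B e e' h x \<sigma>"
  unfolding Lrad_def
proof (rule Sup_least)
  fix a assume "a \<in> {ereal (d' (g y) (g y')) | y'. y' \<in> A \<and> d y y' \<le> \<rho>}"
  then obtain y' where y': "y' \<in> A" "d y y' \<le> \<rho>" "a = ereal (d' (g y) (g y'))" by blast
  have "ereal (d' (g y) (g y') / c) \<le> lrad B e e' h x \<sigma>"
    unfolding lrad_def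
  proof (rule Inf_greatest)
    fix b assume "b \<in> {ereal (e' (h x) (h x')) | x'. x' \<in> B \<and> e x x' \<ge> \<sigma>}"
    then obtain x' where "x' \<in> B" "e x x' \<ge> \<sigma>" "b = ereal (e' (h x) (h x'))" by blast
    then show "ereal (d' (g y) (g y') / c) \<le> b"
      using assms y' by (simp add: divide_le_eq mult.commute)
  qed
  then have "ereal c * ereal (d' (g y) (g y') / c) \<le> ereal c * lrad B e e' h x \<sigma>"
    using assms by (intro ereal_mult_left_mono) auto
  then show "a \<le> ereal c * lrad B e e' h x \<sigma>" using y'(3) assms by simp
qed

lemma filtermap_times_at_right_0:
  "k > 0 \<Longrightarrow> filtermap (times k) (at_right (0::real)) = at_right 0"
  using filtermap_times_pos_at_right[of k 0] by simp

lemma ereal_ratio_rescale_le: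
  fixes X Y :: ereal
  assumes "k > 0" "\<rho> > 0" "X \<le> ereal c * Y"
  shows "ereal k * (X / ereal (k * \<rho>)) \<le> ereal c * (Y / ereal \<rho>)"
proof -
  have "ereal k * (X / ereal (k * \<rho>)) = X / ereal \<rho>"
    using assms by (cases X) (simp_all add: divide_ereal_def field_simps)
  also have "\<dots> \<le> (ereal c * Y) / ereal \<rho>" using assms by simp
  also have "\<dots> = ereal c * (Y / ereal \<rho>)" by (simp add: divide_ereal_def mult.assoc)
  finally show ?thesis .
qed

lemma Liminf_at_right_ratio_le:
  fixes f g :: "real \<Rightarrow> ereal"
  assumes k: "k > 0" and c: "c \<ge> 0" and le: "\<And>\<rho>. \<rho> > 0 \<Longrightarrow> f (k * \<rho>) \<le> ereal c * g \<rho>"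
  shows "ereal k * Liminf (at_right 0) (\<lambda>\<rho>. f \<rho> / ereal \<rho>)
           \<le> ereal c * Liminf (at_right 0) (\<lambda>\<rho>. g \<rho> / ereal \<rho>)"
proof -
  have "inj (times k)" using k by (simp add: inj_on_def)
  have "ereal k * Liminf (at_right 0) (\<lambda>\<rho>. f \<rho> / ereal \<rho>)
      = ereal k * Liminf (at_right 0) (\<lambda>\<rho>. f (k * \<rho>) / ereal (k * \<rho>))"
    using Liminf_filtermap_eq[OF \<open>inj (times k)\<close>, of "at_right 0" "\<lambda>\<rho>. f \<rho> / ereal \<rho>"]
    by (simp add: filtermap_times_at_right_0[OF k])
  also have "\<dots> = Liminf (at_right 0) (\<lambda>\<rho>. ereal k * (f (k * \<rho>) / ereal (k * \<rho>)))"
    using k by (simp add: Liminf_ereal_mult_left)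
  also have "\<dots> \<le> Liminf (at_right 0) (\<lambda>\<rho>. ereal c * (g \<rho> / ereal \<rho>))"
    by (intro Liminf_mono eventually_mono[OF eventually_at_right_less[of 0]]
        ereal_ratio_rescale_le k le) auto
  also have "\<dots> = ereal c * Liminf (at_right 0) (\<lambda>\<rho>. g \<rho> / ereal \<rho>)"
    using c by (simp add: Liminf_ereal_mult_left)
  finally show ?thesis .
qed

lemma Limsup_at_right_ratio_le:
  fixes f g :: "real \<Rightarrow> ereal"
  assumes k: "k > 0" and c: "c \<ge> 0" and le: "\<And>\<rho>. \<rho> > 0 \<Longrightarrow> f (k * \<rho>) \<le> ereal c * g \<rho>"
  shows "ereal k * Limsup (at_right 0) (\<lambda>\<rho>. f \<rho> / ereal \<rho>)
           \<le> ereal c * Limsup (at_right 0) (\<lambda>\<rho>. g \<rho> / ereal \<rho>)"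
proof -
  have "inj (times k)" using k by (simp add: inj_on_def)
  have "ereal k * Limsup (at_right 0) (\<lambda>\<rho>. f \<rho> / ereal \<rho>)
      = ereal k * Limsup (at_right 0) (\<lambda>\<rho>. f (k * \<rho>) / ereal (k * \<rho>))"
    using Limsup_filtermap_eq[OF \<open>inj (times k)\<close>, of "at_right 0" "\<lambda>\<rho>. f \<rho> / ereal \<rho>"]
    by (simp add: filtermap_times_at_right_0[OF k])
  also have "\<dots> = Limsup (at_right 0) (\<lambda>\<rho>. ereal k * (f (k * \<rho>) / ereal (k * \<rho>)))"
    using k by (simp add: Limsup_ereal_mult_left)
  also have "\<dots> \<le> Limsup (at_right 0) (\<lambda>\<rho>. ereal c * (g \<rho> / ereal \<rho>))"
    by (intro Limsup_mono eventually_mono[OF eventually_at_right_less[of 0]]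
        ereal_ratio_rescale_le k le) auto
  also have "\<dots> = ereal c * Limsup (at_right 0) (\<lambda>\<rho>. g \<rho> / ereal \<rho>)"
    using c by (simp add: Limsup_ereal_mult_left)
  finally show ?thesis .
qed

section \<open>Quasisymmetries preserving horizontal leaves\<close>

locale leaf_preserving_quasisymmetry =
  fixes r :: nat and nn :: "nat \<Rightarrow> nat" and \<alpha> :: "nat \<Rightarrow> real"
    and \<eta> \<eta>inv :: "real \<Rightarrow> real"
    and F :: "(nat \<Rightarrow> nat \<Rightarrow> real) \<Rightarrow> (nat \<Rightarrow> nat \<Rightarrow> real)"
    and G :: "(nat \<Rightarrow> nat \<Rightarrow> real) \<Rightarrow> (nat \<Rightarrow> nat \<Rightarrow> real)"
    and H :: "(nat \<Rightarrow> real) \<Rightarrow> (nat \<Rightarrow> nat \<Rightarrow> real) \<Rightarrow> (nat \<Rightarrow> real)"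
  assumes r: "r \<ge> 2"
    and nn: "\<forall>i<r. nn i \<ge> 1"
    and \<alpha>pos: "0 < \<alpha> 0"
    and \<alpha>mono: "strict_mono_on {..<r} \<alpha>"
    and \<eta>: "homeomorphism {0..} {0..} \<eta> \<eta>inv"
    and Fhom: "homeomorphic_map (Metric_space.mtopology (PSp r nn) (Dmet r nn \<alpha>))
                                (Metric_space.mtopology (PSp r nn) (Dmet r nn \<alpha>)) F"
    and Fqs: "quasisymmetric_on (PSp r nn) (Dmet r nn \<alpha>) (Dmet r nn \<alpha>) \<eta> F"
    and Gmap: "\<forall>y\<in>YSp r nn. G y \<in> YSp r nn"
    and Hmap: "\<forall>x\<in>Rsp (nn 0). \<forall>y\<in>YSp r nn. H x y \<in> Rsp (nn 0)"
    and FGH: "\<forall>x\<in>Rsp (nn 0). \<forall>y\<in>YSp r nn. F (y(0 := x)) = (G y)(0 := H x y)"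
begin

abbreviation "PP \<equiv> PSp r nn"
abbreviation "YY \<equiv> YSp r nn"
abbreviation "RR \<equiv> Rsp (nn 0)"
abbreviation "DD \<equiv> Dmet r nn \<alpha>"
abbreviation "DY \<equiv> DYmet r nn \<alpha>"
abbreviation "ee \<equiv> edist (nn 0)"

lemma \<eta>_mono: "0 \<le> s \<Longrightarrow> s \<le> t \<Longrightarrow> \<eta> s \<le> \<eta> t"
  using strict_mono_onD[OF homeomorphism_atLeast0_strict_mono[OF \<eta>], of s t]
  by (cases "s = t") auto

lemma \<eta>_1_pos: "\<eta> 1 > 0"
  using strict_mono_onD[OF homeomorphism_atLeast0_strict_mono[OF \<eta>], of 0 1]
    homeomorphism_atLeast0_zero[OF \<eta>] by simp

lemma \<eta>_\<eta>inv_1: "\<eta> (\<eta>inv 1) = 1"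
  using \<eta> by (simp add: homeomorphism_def)

lemma \<eta>inv_1_pos: "\<eta>inv 1 > 0"
proof -
  have "\<eta>inv 1 \<ge> 0" using \<eta> unfolding homeomorphism_def by auto
  moreover have "\<eta>inv 1 \<noteq> 0" using \<eta>_\<eta>inv_1 homeomorphism_atLeast0_zero[OF \<eta>] by auto
  ultimately show ?thesis by simp
qed

lemma Dmet_space: "Metric_space PP DD"
  using Dmet_metric \<alpha>pos \<alpha>mono r by simp

lemma F_inj_on: "inj_on F PP"
  using homeomorphic_imp_injective_map[OF Fhom] Metric_space.topspace_mtopology[OF Dmet_space]
  by simp

lemma F_image: "F ` PP = PP"
  using homeomorphic_imp_surjective_map[OF Fhom] Metric_space.topspace_mtopology[OF Dmet_space]
  by simp

lemma F_quasisymmetric: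
  "\<lbrakk>p \<in> PP; q \<in> PP; s \<in> PP; p \<noteq> q; p \<noteq> s; q \<noteq> s\<rbrakk> \<Longrightarrow>
    DD (F p) (F q) / DD (F p) (F s) \<le> \<eta> (DD p q / DD p s)"
  using Fqs unfolding quasisymmetric_on_def by blast

lemma upd0_in_PSp: "y \<in> YY \<Longrightarrow> u \<in> RR \<Longrightarrow> y(0 := u) \<in> PP"
  using r by (auto simp: YSp_def PSp_def)

lemma PSp_decompose:
  "p \<in> PP \<Longrightarrow> p(0 := (\<lambda>_. 0)) \<in> YY \<and> p 0 \<in> RR \<and> (p(0 := (\<lambda>_. 0)))(0 := p 0) = p"
  using r by (auto simp: YSp_def PSp_def Rsp_def)

lemma upd0_eq_upd0D:
  assumes "y \<in> YY" "y' \<in> YY" "y(0 := u) = y'(0 := u')"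
  shows "y = y' \<and> u = u'"
proof -
  have "y i = y' i" for i
    using fun_cong[OF assms(3), of i] assms(1,2) by (cases "i = 0") (auto simp: YSp_def)
  then show ?thesis using fun_cong[OF assms(3), of 0] by auto
qed

lemma F_upd0: "y \<in> YY \<Longrightarrow> u \<in> RR \<Longrightarrow> F (y(0 := u)) = (G y)(0 := H u y)"
  using FGH by blast

lemma H_inj:
  assumes "y \<in> YY" "u \<in> RR" "u' \<in> RR" "H u y = H u' y"
  shows "u = u'"
proof -
  have "F (y(0 := u)) = F (y(0 := u'))" using F_upd0 assms by simp
  then have "y(0 := u) = y(0 := u')" using F_inj_on upd0_in_PSp assms by (meson inj_onD)
  then show ?thesis using upd0_eq_upd0D assms by blast
qed

lemma Dmet_upd0_leaf: "DD (y(0 := u)) (y(0 := u')) = ee u u'"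
  using Dmet_upd0_same r \<alpha>pos by simp

lemma Dmet_upd0_vertical: "DD (y(0 := u)) (y'(0 := u)) = DY y y'"
  using Dmet_eq_DYmet[OF r] by simp

lemma DYmet_le_Dmet_upd0: "DY y y' \<le> DD (y(0 := u)) (y'(0 := u'))"
  using DYmet_le_Dmet[OF r, of nn \<alpha> "y(0 := u)" "y'(0 := u')"] by simp

lemma Dmet_F_leaf:
  "y \<in> YY \<Longrightarrow> u \<in> RR \<Longrightarrow> u' \<in> RR \<Longrightarrow> DD (F (y(0 := u))) (F (y(0 := u'))) = ee (H u y) (H u' y)"
  by (simp add: F_upd0 Dmet_upd0_leaf)

lemma DYmet_G_le_Dmet_F:
  "y \<in> YY \<Longrightarrow> y' \<in> YY \<Longrightarrow> u \<in> RR \<Longrightarrow> u' \<in> RR \<Longrightarrow>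
    DY (G y) (G y') \<le> DD (F (y(0 := u))) (F (y'(0 := u')))"
  using DYmet_le_Dmet_upd0 by (simp add: F_upd0)

lemma Dmet_F_vertical:
  "y \<in> YY \<Longrightarrow> y' \<in> YY \<Longrightarrow> u \<in> RR \<Longrightarrow> u' \<in> RR \<Longrightarrow> H u y = H u' y' \<Longrightarrow>
    DD (F (y(0 := u))) (F (y'(0 := u'))) = DY (G y) (G y')"
  using F_upd0[of y u] F_upd0[of y' u'] Dmet_upd0_vertical[of "G y" "H u y" "G y'"] by simp

text \<open>Quasisymmetry against a fixed third point \<open>u\<^sub>1\<close> at distance 1 from \<open>u\<close> turns the
  continuity of \<open>\<eta>\<close> at 0 into continuity of \<open>H(\<cdot>,z)\<close> at \<open>u\<close>.\<close>

lemma H_continuous: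
  assumes z: "z \<in> YY" and u: "u \<in> RR" and \<epsilon>: "\<epsilon> > 0"
  shows "\<exists>\<delta>>0. \<forall>u'\<in>RR. ee u u' < \<delta> \<longrightarrow> ee (H u z) (H u' z) < \<epsilon>"
proof -
  obtain u1 where u1: "u1 \<in> RR" "ee u u1 = 1"
    using exists_Rsp_at_edist[of "nn 0" u 1] nn r u by auto
  then have "u \<noteq> u1" by auto
  define c where "c = ee (H u z) (H u1 z)"
  have c: "c > 0" unfolding c_def
    using edist_pos Hmap z u u1 H_inj[OF z u u1(1)] \<open>u \<noteq> u1\<close> by metis
  obtain \<delta> where \<delta>: "\<delta> > 0" "\<forall>t. 0 \<le> t \<and> t < \<delta> \<longrightarrow> \<eta> t < \<epsilon> / c"
    using homeomorphism_atLeast0_small[OF \<eta>, of "\<epsilon> / c"] \<epsilon> c by auto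
  show ?thesis
  proof (intro exI[of _ "min \<delta> (1/2)"] conjI ballI impI)
    fix u' assume u': "u' \<in> RR" and close: "ee u u' < min \<delta> (1/2)"
    show "ee (H u z) (H u' z) < \<epsilon>"
    proof (cases "u' = u")
      case False
      have "u' \<noteq> u1" using close u1 by auto
      let ?p = "z(0 := u)" and ?q = "z(0 := u')" and ?s = "z(0 := u1)"
      have "?p \<noteq> ?q" "?p \<noteq> ?s" "?q \<noteq> ?s"
        using False \<open>u \<noteq> u1\<close> \<open>u' \<noteq> u1\<close> by (auto dest: fun_cong[of _ _ 0])
      then have "DD (F ?p) (F ?q) / DD (F ?p) (F ?s) \<le> \<eta> (DD ?p ?q / DD ?p ?s)"
        using upd0_in_PSp z u u' u1 by (intro F_quasisymmetric) auto
      then have "ee (H u z) (H u' z) / c \<le> \<eta> (ee u u')"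
        using Dmet_F_leaf[OF z u u'] Dmet_F_leaf[OF z u u1(1)] u1 by (simp add: Dmet_upd0_leaf c_def)
      also have "\<dots> < \<epsilon> / c" using \<delta> close edist_nonneg[of "nn 0" u u'] by auto
      finally show ?thesis using c by (simp add: divide_less_cancel)
    qed (use \<epsilon> in simp)
  qed (use \<delta> in simp)
qed

text \<open>The images \<open>H(\<real>\<^sup>n\<^sup>1, z)\<close> for the leaves \<open>z\<close> with \<open>G z = G y'\<close> are open by invariance of
  domain and partition \<open>\<real>\<^sup>n\<^sup>1\<close> because F is bijective, so by connectedness there is only one.\<close>

lemma H_surj:
  assumes y': "y' \<in> YY" and w: "w \<in> RR"
  shows "\<exists>x\<in>RR. H x y' = w"
proof -
  let ?E = "Euclidean_space (nn 0)"
  have H_open: "openin ?E ((\<lambda>u. H u z) ` RR)" if z: "z \<in> YY" for z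
    using Hmap H_continuous H_inj z by (intro openin_image_Euclidean_space inj_onI) blast+
  let ?T = "(\<lambda>u. H u y') ` RR"
  have complement: "RR - ?T = (\<Union>z\<in>{z \<in> YY. G z = G y' \<and> z \<noteq> y'}. (\<lambda>u. H u z) ` RR)"
  proof (intro equalityI subsetI)
    fix v assume v: "v \<in> RR - ?T"
    have "(G y')(0 := v) \<in> PP" using upd0_in_PSp Gmap y' v by blast
    then obtain p where p: "p \<in> PP" "F p = (G y')(0 := v)" using F_image by (metis imageE)
    define z where "z = p(0 := (\<lambda>_. 0))"
    have z: "z \<in> YY" "p 0 \<in> RR" "z(0 := p 0) = p" using PSp_decompose[OF p(1)] by (auto simp: z_def)
    have "(G z)(0 := H (p 0) z) = (G y')(0 := v)" using F_upd0[OF z(1,2)] z(3) p(2) by simp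
    then have "G z = G y'" "H (p 0) z = v" using upd0_eq_upd0D Gmap z(1) y' by blast+
    moreover have "z \<noteq> y'" using v calculation z(2) by auto
    ultimately show "v \<in> (\<Union>z\<in>{z \<in> YY. G z = G y' \<and> z \<noteq> y'}. (\<lambda>u. H u z) ` RR)"
      using z by blast
  next
    fix v assume "v \<in> (\<Union>z\<in>{z \<in> YY. G z = G y' \<and> z \<noteq> y'}. (\<lambda>u. H u z) ` RR)"
    then obtain z u where zu: "z \<in> YY" "G z = G y'" "z \<noteq> y'" "u \<in> RR" "v = H u z" by blast
    have "v \<notin> ?T"
    proof
      assume "v \<in> ?T"
      then obtain u' where u': "u' \<in> RR" "v = H u' y'" by blast
      have "F (z(0 := u)) = F (y'(0 := u'))" using F_upd0 zu u' y' by simp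
      then have "z(0 := u) = y'(0 := u')" using F_inj_on upd0_in_PSp zu u' y' by (meson inj_onD)
      then show False using upd0_eq_upd0D zu y' by blast
    qed
    then show "v \<in> RR - ?T" using Hmap zu by blast
  qed
  have "openin ?E (RR - ?T)" unfolding complement using H_open by blast
  then have "closedin ?E ?T"
    unfolding closedin_def topspace_Euclidean_space_Rsp using Hmap y' by blast
  moreover have "?T \<noteq> {}" using Rsp_def by auto
  ultimately have "?T = RR"
    using H_open[OF y'] connected_Euclidean_space[of "nn 0", unfolded connected_space_clopen_in]
    by (auto simp: topspace_Euclidean_space_Rsp)
  then show ?thesis using w by (metis imageE)
qed

lemma G_displacement_le:
  assumes y: "y \<in> YY" and y': "y' \<in> YY" and x: "x \<in> RR" and x': "x' \<in> RR"
    and \<rho>: "\<rho> > 0" and near: "DY y y' \<le> \<rho>" and far: "ee x x' \<ge> \<rho>"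
  shows "DY (G y) (G y') \<le> \<eta> 1 * ee (H x y) (H x' y)"
proof (cases "y' = y")
  case True
  then show ?thesis using DYmet_eq_0[OF r] \<eta>_1_pos edist_nonneg by simp
next
  case False
  have "x \<noteq> x'" using far \<rho> by auto
  let ?p = "y(0 := x)" and ?q = "y(0 := x')" and ?s = "y'(0 := x)"
  have "?p \<noteq> ?s" "?p \<noteq> ?q" "?s \<noteq> ?q"
    using upd0_eq_upd0D[OF y y'] upd0_eq_upd0D[OF y' y] False \<open>x \<noteq> x'\<close> by (auto dest: fun_cong[of _ _ 0])
  then have qs: "DD (F ?p) (F ?s) / DD (F ?p) (F ?q) \<le> \<eta> (DD ?p ?s / DD ?p ?q)"
    using upd0_in_PSp y y' x x' by (intro F_quasisymmetric) auto
  have H_pos: "ee (H x y) (H x' y) > 0"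
    using edist_pos Hmap y x x' H_inj[OF y x x'] \<open>x \<noteq> x'\<close> by metis
  have "DD ?p ?s / DD ?p ?q = DY y y' / ee x x'"
    by (simp add: Dmet_upd0_vertical Dmet_upd0_leaf)
  moreover have "0 \<le> DY y y' / ee x x'" "DY y y' / ee x x' \<le> 1"
    using DYmet_nonneg[OF r] edist_nonneg near far \<rho> by (auto simp: divide_le_eq)
  ultimately have "DD (F ?p) (F ?s) / ee (H x y) (H x' y) \<le> \<eta> 1"
    using qs \<eta>_mono Dmet_F_leaf[OF y x x'] by fastforce
  then have "DD (F ?p) (F ?s) \<le> \<eta> 1 * ee (H x y) (H x' y)"
    using H_pos by (simp add: divide_le_eq)
  then show ?thesis using DYmet_G_le_Dmet_F[OF y y' x x] by linarith
qed

lemma H_displacement_le: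
  assumes y: "y \<in> YY" and y': "y' \<in> YY" and x: "x \<in> RR" and x': "x' \<in> RR"
    and \<rho>: "\<rho> > 0" and far: "DY y y' \<ge> \<rho>" and near: "ee x x' \<le> \<eta>inv 1 * \<rho>"
  shows "ee (H x y) (H x' y) \<le> DY (G y) (G y')"
proof (cases "x' = x")
  case True
  then show ?thesis using DYmet_nonneg[OF r] by simp
next
  case False
  have "y \<noteq> y'" using far \<rho> DYmet_eq_0[OF r, of y y' nn \<alpha>] by auto
  obtain x'' where x'': "x'' \<in> RR" "H x'' y' = H x y" using H_surj[OF y'] Hmap y x by blast
  let ?p = "y(0 := x)" and ?q = "y(0 := x')" and ?s = "y'(0 := x'')"
  have ne: "?p \<noteq> ?q" "?p \<noteq> ?s" "?q \<noteq> ?s"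
    using upd0_eq_upd0D[OF y y'] False \<open>y \<noteq> y'\<close> by (auto dest: fun_cong[of _ _ 0])
  then have qs: "DD (F ?p) (F ?q) / DD (F ?p) (F ?s) \<le> \<eta> (DD ?p ?q / DD ?p ?s)"
    using upd0_in_PSp y y' x x' x'' by (intro F_quasisymmetric) auto
  have G_eq: "DD (F ?p) (F ?s) = DY (G y) (G y')"
    by (rule Dmet_F_vertical[OF y y' x x''(1) x''(2)[symmetric]])
  have "F ?p \<noteq> F ?s" using F_inj_on upd0_in_PSp y y' x x'' ne by (meson inj_onD)
  then have G_pos: "DY (G y) (G y') > 0"
    using Metric_space.zero[OF Dmet_space] Metric_space.nonneg[OF Dmet_space] G_eq
      F_image upd0_in_PSp y y' x x'' by (metis image_eqI less_eq_real_def)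
  have "\<rho> \<le> DD ?p ?s" using DYmet_le_Dmet_upd0[of y y' x x''] far by linarith
  then have "DD ?p ?q / DD ?p ?s \<le> \<eta>inv 1"
    using near \<eta>inv_1_pos \<rho> by (simp add: Dmet_upd0_leaf divide_le_eq)
      (smt (verit) mult_left_mono)
  moreover have "0 \<le> DD ?p ?q / DD ?p ?s" using Metric_space.nonneg[OF Dmet_space] by simp
  ultimately have "\<eta> (DD ?p ?q / DD ?p ?s) \<le> 1" using \<eta>_mono \<eta>_\<eta>inv_1 by metis
  with qs G_eq Dmet_F_leaf[OF y x x'] have "ee (H x y) (H x' y) / DY (G y) (G y') \<le> 1" by simp
  then show ?thesis using G_pos by (simp add: divide_le_eq)
qed

lemma Lrad_G_le_lrad_H:
  assumes "y \<in> YY" "x \<in> RR" "\<rho> > 0"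
  shows "Lrad YY DY DY G y \<rho> \<le> ereal (\<eta> 1) * lrad RR ee ee (\<lambda>x'. H x' y) x \<rho>"
  using assms G_displacement_le by (intro Lrad_le_scaled_lrad \<eta>_1_pos) auto

lemma Lrad_H_le_lrad_G:
  assumes "y \<in> YY" "x \<in> RR" "\<rho> > 0"
  shows "Lrad RR ee ee (\<lambda>x'. H x' y) x (\<eta>inv 1 * \<rho>) \<le> lrad YY DY DY G y \<rho>"
  using assms H_displacement_le by (intro Lrad_le_scaled_lrad[where c = 1, simplified]) auto

lemma lrad_G_le_Lrad_G:
  assumes "y \<in> YY" "\<rho> \<ge> 0"
  shows "lrad YY DY DY G y \<rho> \<le> Lrad YY DY DY G y \<rho>"
proof -
  have "\<alpha> 1 > 0" using strict_mono_onD[OF \<alpha>mono, of 0 1] r \<alpha>pos by simp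
  then obtain y' where "y' \<in> YY" "DY y y' = \<rho>"
    using exists_YSp_at_DYmet[of r nn \<alpha>] r nn \<alpha>pos assms by blast
  then show ?thesis by (auto intro: lrad_le_Lrad)
qed

lemma lrad_H_le_Lrad_H:
  "x \<in> RR \<Longrightarrow> \<rho> \<ge> 0 \<Longrightarrow> lrad RR ee ee (\<lambda>x'. H x' y) x \<rho> \<le> Lrad RR ee ee (\<lambda>x'. H x' y) x \<rho>"
  using exists_Rsp_at_edist[of "nn 0" x \<rho>] nn r by (auto intro: lrad_le_Lrad)

lemma lrad_H_scaled_le_lrad_G:
  "y \<in> YY \<Longrightarrow> x \<in> RR \<Longrightarrow> \<rho> > 0 \<Longrightarrow>
    lrad RR ee ee (\<lambda>x'. H x' y) x (\<eta>inv 1 * \<rho>) \<le> lrad YY DY DY G y \<rho>"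
  using lrad_H_le_Lrad_H[of x "\<eta>inv 1 * \<rho>" y] Lrad_H_le_lrad_G \<eta>inv_1_pos by force

lemma lrad_G_le_lrad_H:
  assumes "y \<in> YY" "x \<in> RR" "\<rho> > 0"
  shows "lrad YY DY DY G y \<rho> \<le> ereal (\<eta> 1) * lrad RR ee ee (\<lambda>x'. H x' y) x \<rho>"
  by (rule order.trans[OF lrad_G_le_Lrad_G[OF assms(1)] Lrad_G_le_lrad_H[OF assms]]) (use assms in simp)

lemma Lrad_H_scaled_le_Lrad_G:
  assumes "y \<in> YY" "x \<in> RR" "\<rho> > 0"
  shows "Lrad RR ee ee (\<lambda>x'. H x' y) x (\<eta>inv 1 * \<rho>) \<le> Lrad YY DY DY G y \<rho>"
  by (rule order.trans[OF Lrad_H_le_lrad_G[OF assms] lrad_G_le_Lrad_G[OF assms(1)]]) (use assms in simp)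

lemma Lrad_G_le_Lrad_H:
  assumes "y \<in> YY" "x \<in> RR" "\<rho> > 0"
  shows "Lrad YY DY DY G y \<rho> \<le> ereal (\<eta> 1) * Lrad RR ee ee (\<lambda>x'. H x' y) x \<rho>"
proof -
  have "ereal (\<eta> 1) * lrad RR ee ee (\<lambda>x'. H x' y) x \<rho> \<le> ereal (\<eta> 1) * Lrad RR ee ee (\<lambda>x'. H x' y) x \<rho>"
    using assms lrad_H_le_Lrad_H \<eta>_1_pos by (intro ereal_mult_left_mono) auto
  then show ?thesis using Lrad_G_le_lrad_H[OF assms] by simp
qed

end

theorem lemma4p3:
  fixes r :: nat and nn :: "nat \<Rightarrow> nat" and \<alpha> :: "nat \<Rightarrow> real"
    and \<eta> \<eta>inv :: "real \<Rightarrow> real"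
    and F :: "(nat \<Rightarrow> nat \<Rightarrow> real) \<Rightarrow> (nat \<Rightarrow> nat \<Rightarrow> real)"
    and G :: "(nat \<Rightarrow> nat \<Rightarrow> real) \<Rightarrow> (nat \<Rightarrow> nat \<Rightarrow> real)"
    and H :: "(nat \<Rightarrow> real) \<Rightarrow> (nat \<Rightarrow> nat \<Rightarrow> real) \<Rightarrow> (nat \<Rightarrow> real)"
  assumes r: "r \<ge> 2"
    and nn: "\<forall>i<r. nn i \<ge> 1"
    and \<alpha>pos: "0 < \<alpha> 0"
    and \<alpha>mono: "strict_mono_on {..<r} \<alpha>"
    and \<eta>: "homeomorphism {0..} {0..} \<eta> \<eta>inv"
    and Fhom: "homeomorphic_map (Metric_space.mtopology (PSp r nn) (Dmet r nn \<alpha>))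
                                (Metric_space.mtopology (PSp r nn) (Dmet r nn \<alpha>)) F"
    and Fqs: "quasisymmetric_on (PSp r nn) (Dmet r nn \<alpha>) (Dmet r nn \<alpha>) \<eta> F"
    and Gmap: "\<forall>y\<in>YSp r nn. G y \<in> YSp r nn"
    and Hmap: "\<forall>x\<in>Rsp (nn 0). \<forall>y\<in>YSp r nn. H x y \<in> Rsp (nn 0)"
    and FGH: "\<forall>x\<in>Rsp (nn 0). \<forall>y\<in>YSp r nn. F (y(0 := x)) = (G y)(0 := H x y)"
  shows "\<forall>y\<in>YSp r nn. \<forall>x\<in>Rsp (nn 0).
     (\<forall>\<rho>>0. Lrad (YSp r nn) (DYmet r nn \<alpha>) (DYmet r nn \<alpha>) G y \<rho>
              \<le> ereal (\<eta> 1) * lrad (Rsp (nn 0)) (edist (nn 0)) (edist (nn 0)) (\<lambda>x'. H x' y) x \<rho>)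
   \<and> ereal (\<eta>inv 1) * lpt (Rsp (nn 0)) (edist (nn 0)) (edist (nn 0)) (\<lambda>x'. H x' y) x
       \<le> lpt (YSp r nn) (DYmet r nn \<alpha>) (DYmet r nn \<alpha>) G y
   \<and> lpt (YSp r nn) (DYmet r nn \<alpha>) (DYmet r nn \<alpha>) G y
       \<le> ereal (\<eta> 1) * lpt (Rsp (nn 0)) (edist (nn 0)) (edist (nn 0)) (\<lambda>x'. H x' y) x
   \<and> ereal (\<eta>inv 1) * Lpt (Rsp (nn 0)) (edist (nn 0)) (edist (nn 0)) (\<lambda>x'. H x' y) x
       \<le> Lpt (YSp r nn) (DYmet r nn \<alpha>) (DYmet r nn \<alpha>) G y
   \<and> Lpt (YSp r nn) (DYmet r nn \<alpha>) (DYmet r nn \<alpha>) G y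
       \<le> ereal (\<eta> 1) * Lpt (Rsp (nn 0)) (edist (nn 0)) (edist (nn 0)) (\<lambda>x'. H x' y) x"
proof -
  interpret leaf_preserving_quasisymmetry r nn \<alpha> \<eta> \<eta>inv F G H
    using assms by (simp add: leaf_preserving_quasisymmetry_def)
  have \<kappa>: "\<eta>inv 1 > 0" and c: "\<eta> 1 \<ge> 0" using \<eta>inv_1_pos \<eta>_1_pos by auto
  show ?thesis
    unfolding lpt_def Lpt_def
  proof (intro ballI conjI allI impI)
    fix y x assume y: "y \<in> YY" and x: "x \<in> RR"
    show "\<And>\<rho>. \<rho> > 0 \<Longrightarrow> Lrad YY DY DY G y \<rho> \<le> ereal (\<eta> 1) * lrad RR ee ee (\<lambda>x'. H x' y) x \<rho>"
      using Lrad_G_le_lrad_H y x by blast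
    show "ereal (\<eta>inv 1) * Liminf (at_right 0) (\<lambda>\<rho>. lrad RR ee ee (\<lambda>x'. H x' y) x \<rho> / ereal \<rho>)
        \<le> Liminf (at_right 0) (\<lambda>\<rho>. lrad YY DY DY G y \<rho> / ereal \<rho>)"
      by (rule Liminf_at_right_ratio_le[where c = 1, simplified])
        (use \<kappa> lrad_H_scaled_le_lrad_G y x in auto)
    show "Liminf (at_right 0) (\<lambda>\<rho>. lrad YY DY DY G y \<rho> / ereal \<rho>)
        \<le> ereal (\<eta> 1) * Liminf (at_right 0) (\<lambda>\<rho>. lrad RR ee ee (\<lambda>x'. H x' y) x \<rho> / ereal \<rho>)"
      by (rule Liminf_at_right_ratio_le[where k = 1, simplified])
        (use c lrad_G_le_lrad_H y x in auto)
    show "ereal (\<eta>inv 1) * Limsup (at_right 0) (\<lambda>\<rho>. Lrad RR ee ee (\<lambda>x'. H x' y) x \<rho> / ereal \<rho>)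
        \<le> Limsup (at_right 0) (\<lambda>\<rho>. Lrad YY DY DY G y \<rho> / ereal \<rho>)"
      by (rule Limsup_at_right_ratio_le[where c = 1, simplified])
        (use \<kappa> Lrad_H_scaled_le_Lrad_G y x in auto)
    show "Limsup (at_right 0) (\<lambda>\<rho>. Lrad YY DY DY G y \<rho> / ereal \<rho>)
        \<le> ereal (\<eta> 1) * Limsup (at_right 0) (\<lambda>\<rho>. Lrad RR ee ee (\<lambda>x'. H x' y) x \<rho> / ereal \<rho>)"
      by (rule Limsup_at_right_ratio_le[where k = 1, simplified])
        (use c Lrad_G_le_Lrad_H y x in auto)
  qed
qed

end
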